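(* Any trajectory $(q(t),X(t),\mu(t),r(t))$ of the elastic-demand dynamics \begin{align*} \dot{q}_j &= \sum_{i=1}^m x_{ij} - \frac{q_j}{T}, \quad j=1,\ldots,n,\\ \mu_j(q_j) &= T\left[1-\frac{c_j}{q_j}\right]^+, \quad j=1,\ldots,n,\\ x_{ij} &= r_i\,\delta_{ij}(\mu),\qquad \delta_{ij}(\mu)=\frac{e^{-(\kappa_{ij}+\mu_j)/\epsilon}}{\sum_{k=1}^n e^{-(\kappa_{ik}+\mu_k)/\epsilon}},\\ r_i &= \bar{r}_i\, p_i\big(\varphi^i_\epsilon(\mu)\big),\qquad \varphi^i_\epsilon(\mu)=-\epsilon\log\Big(\sum_{j=1}^n e^{-(\kappa_{ij}+\mu_j)/\epsilon}\Big), \end{align*} converges asymptotically to the (unique) equilibrium point $(X^*,q^*,\mu^*,r^* )$ of these dynamics, which is characterized as follows: $(r^*,\mu^* )$ is the unique saddle point (minimum in $r$, maximum in $\mu$) over $r\in\prod_{i=1}^m[0,\bar r_i]$, $\mu\in[0,T)^n$ of \[ W(r,\mu)=\sum_i\big[r_i\varphi^i_\epsilon(\mu)-U_i(r_i)\big]+\sum_j c_j\log\Big(1-\frac{\mu_j}{T}\Big), \] and, given $r^*$, $(X^*,q^* )$ is the unique solution of the convex program \[ \min_{X,q}\ \sum_{i,j}\kappa_{ij}x_{ij}+\sum_j\beta_j(q_j)+\epsilon\sum_{i,j}x_{ij}\log\Big(\frac{x_{ij}}{r^*_i}\Big) \] subject to $x_{ij}\ge 0$, $\sum_j x_{ij}=r^*_i$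 for all $i$, and $\sum_i x_{ij}=q_j/T$ for all $j$, where $\beta_j(q_j)=\int_0^{q_j}[1-c_j/\sigma]^+\,d\sigma$.
   Context: There are $n$ EV charging stations with capacities $c_j>0$ and $m$ demand locations with exogenous constant transport times $\kappa_{ij}$; $T>0$ is the mean sojourn time, $\epsilon>0$ a smoothing parameter, and $[\cdot]^+=\max\{\cdot,0\}$. $q_j$ is the queue at station $j$, $\mu_j$ its waiting delay, $x_{ij}$ the rate from location $i$ to station $j$. Demand at location $i$ is elastic: $\bar r_i>0$ is the maximum request rate and $p_i(\tau)=\mathcal{P}(T_i>\tau)$ is the complementary CDF of an absolutely continuous willingness-to-wait variable $T_i$, continuous and decreasing from 1 to 0 on $[0,\infty)$. The utility $U_i$ is increasing and concave with $r_i=\arg\max_{r_i\ge0}[U_i(r_i)-\tau_i r_i]=\bar r_i p_i(\tau_i)$ (i.e. $U_i'$ is the inverse of $\tau\mapsto \bar r_i p_i(\tau)$), and $U_i$ is assumed strictly concave on $[0,\bar r_i]$. The dynamics have a globally Lipschitz right-hand side in $q$, so solutions exist, are unique and defined for all time. *)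

theory Defs
  imports "HOL-Analysis.Analysis"
begin

definition strictly_concave_on :: "real set \<Rightarrow> (real \<Rightarrow> real) \<Rightarrow> bool" where
  "strictly_concave_on S f \<longleftrightarrow> convex S \<and>
     (\<forall>x\<in>S. \<forall>y\<in>S. x \<noteq> y \<longrightarrow> (\<forall>u. 0 < u \<and> u < 1 \<longrightarrow>
        f (u * x + (1 - u) * y) > u * f x + (1 - u) * f y))"

(* waiting delay mu_j(q_j) = T [1 - c_j/q_j]^+ ; for q_j \<le> c_j it is 0
   (this also fixes the value at q_j = 0, where c_j/q_j is undefined) *)
definition delay :: "real \<Rightarrow> real \<Rightarrow> real \<Rightarrow> real" where
  "delay T c q = (if q \<le> c then 0 else T * (1 - c / q))"

definition softmin :: "real \<Rightarrow> ('s::finite \<Rightarrow> real) \<Rightarrow> ('s \<Rightarrow> real) \<Rightarrow> real" where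
  "softmin eps kap mu = - eps * ln (\<Sum>k\<in>UNIV. exp (- (kap k + mu k) / eps))"

definition logit :: "real \<Rightarrow> ('s::finite \<Rightarrow> real) \<Rightarrow> ('s \<Rightarrow> real) \<Rightarrow> 's \<Rightarrow> real" where
  "logit eps kap mu j =
     exp (- (kap j + mu j) / eps) / (\<Sum>k\<in>UNIV. exp (- (kap k + mu k) / eps))"

definition beta :: "real \<Rightarrow> real \<Rightarrow> real" where
  "beta c q = integral {0..q} (\<lambda>\<sigma>. if \<sigma> \<le> c then 0 else 1 - c / \<sigma>)"

(* x log(x / r) with the convention 0 log 0 = 0 *)
definition xlogx_rel :: "real \<Rightarrow> real \<Rightarrow> real" where
  "xlogx_rel x r = (if x = 0 then 0 else x * ln (x / r))"

definition Wfun :: "real \<Rightarrow> real \<Rightarrow> ('l::finite \<Rightarrow> 's::finite \<Rightarrow> real) \<Rightarrow> ('s \<Rightarrow> real)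
    \<Rightarrow> ('l \<Rightarrow> real \<Rightarrow> real) \<Rightarrow> ('l \<Rightarrow> real) \<Rightarrow> ('s \<Rightarrow> real) \<Rightarrow> real" where
  "Wfun T eps kap c U r mu =
     (\<Sum>i\<in>UNIV. r i * softmin eps (kap i) mu - U i (r i))
     + (\<Sum>j\<in>UNIV. c j * ln (1 - mu j / T))"

definition saddle_point :: "real \<Rightarrow> real \<Rightarrow> ('l::finite \<Rightarrow> 's::finite \<Rightarrow> real) \<Rightarrow> ('s \<Rightarrow> real)
    \<Rightarrow> ('l \<Rightarrow> real \<Rightarrow> real) \<Rightarrow> ('l \<Rightarrow> real) \<Rightarrow> ('l \<Rightarrow> real) \<Rightarrow> ('s \<Rightarrow> real) \<Rightarrow> bool" where
  "saddle_point T eps kap c U rbar r mu \<longleftrightarrow>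
     (\<forall>i. 0 \<le> r i \<and> r i \<le> rbar i) \<and> (\<forall>j. 0 \<le> mu j \<and> mu j < T) \<and>
     (\<forall>r' mu'. (\<forall>i. 0 \<le> r' i \<and> r' i \<le> rbar i) \<longrightarrow> (\<forall>j. 0 \<le> mu' j \<and> mu' j < T) \<longrightarrow>
        Wfun T eps kap c U r mu' \<le> Wfun T eps kap c U r mu \<and>
        Wfun T eps kap c U r mu \<le> Wfun T eps kap c U r' mu)"

definition feasible :: "real \<Rightarrow> ('l::finite \<Rightarrow> real) \<Rightarrow> ('l \<Rightarrow> 's::finite \<Rightarrow> real) \<Rightarrow> ('s \<Rightarrow> real) \<Rightarrow> bool" where
  "feasible T r X q \<longleftrightarrow> (\<forall>i j. X i j \<ge> 0) \<and> (\<forall>i. (\<Sum>j\<in>UNIV. X i j) = r i)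
     \<and> (\<forall>j. (\<Sum>i\<in>UNIV. X i j) = q j / T)"

definition objective :: "real \<Rightarrow> ('l::finite \<Rightarrow> 's::finite \<Rightarrow> real) \<Rightarrow> ('s \<Rightarrow> real) \<Rightarrow> ('l \<Rightarrow> real)
    \<Rightarrow> ('l \<Rightarrow> 's \<Rightarrow> real) \<Rightarrow> ('s \<Rightarrow> real) \<Rightarrow> real" where
  "objective eps kap c r X q =
     (\<Sum>i\<in>UNIV. \<Sum>j\<in>UNIV. kap i j * X i j) + (\<Sum>j\<in>UNIV. beta (c j) (q j))
     + eps * (\<Sum>i\<in>UNIV. \<Sum>j\<in>UNIV. xlogx_rel (X i j) (r i))"

end

(*
  Equilibrium: the queue vector q* is a fixed point of q |-> T * arrival(delays q), which exists by
  Brouwer's theorem on a box. At q* each ingredient satisfies its first-order condition: the logit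
  split is the gradient of the concave soft-min, the delay T [1 - c/q]^+ maximizes
  m F + c ln (1 - m/T), and the demand rbar p(phi) minimizes r phi - U(r). Hence r*, mu* form a
  saddle point of W, unique by strict concavity in both variables, and the same conditions are the
  KKT conditions of the entropy-regularized convex program (tangent inequalities for x log x and
  for the convex potential beta).

  Convergence: V(t) = sum_j T beta_j(q_j) - mu*_j q_j is bounded below, and along trajectories
  V' <= -(c_j / T^2) (mu_j - mu*_j)^2, because the arrival map is monotone decreasing (concave
  soft-min, nonincreasing demand) and the delay is co-coercive in the queue. Since the delays are
  Lipschitz in time, a Barbalat argument gives mu -> mu*; then the arrivals converge and the
  linear relaxation q' = arrival - q/T drives q to q*.
*)
theory Submission
  imports Defs "HOL-Real_Asymp.Real_Asymp"
begin

section \<open>Complementary distribution function of a density\<close>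

locale nonneg_density =
  fixes f :: "real \<Rightarrow> real"
  assumes nonneg: "\<And>x. f x \<ge> 0"
    and support: "\<And>x. x < 0 \<Longrightarrow> f x = 0"
    and total: "(f has_integral 1) {0..}"
begin

lemma density_has_integral_UNIV: "(f has_integral 1) UNIV"
proof -
  have "(\<lambda>x. if x \<in> {0..} then f x else 0) = f"
    using support by (auto simp: fun_eq_iff)
  then show ?thesis
    using total has_integral_restrict_UNIV[of "{0..}" f 1] by simp
qed

lemma ccdf_has_integral:
  assumes "a \<le> 0" "a \<le> \<tau>"
  shows "f integrable_on {a..\<tau>}" and "(f has_integral 1 - integral {a..\<tau>} f) {\<tau><..}"
proof -
  show int: "f integrable_on {a..\<tau>}"
    using integrable_on_subcbox[of f UNIV a \<tau>] density_has_integral_UNIV by auto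
  have "(\<lambda>x. if x \<in> {\<tau><..} then f x else 0) = (\<lambda>x. f x - (if x \<in> {a..\<tau>} then f x else 0))"
    using support assms by (auto simp: fun_eq_iff)
  moreover have "((\<lambda>x. if x \<in> {a..\<tau>} then f x else 0) has_integral integral {a..\<tau>} f) UNIV"
    using int has_integral_restrict_UNIV integrable_integral by blast
  ultimately have "((\<lambda>x. if x \<in> {\<tau><..} then f x else 0) has_integral 1 - integral {a..\<tau>} f) UNIV"
    using has_integral_diff[OF density_has_integral_UNIV] by simp
  then show "(f has_integral 1 - integral {a..\<tau>} f) {\<tau><..}"
    using has_integral_restrict_UNIV by blast
qed

lemma ccdf_eq: "a \<le> 0 \<Longrightarrow> a \<le> \<tau> \<Longrightarrow> integral {\<tau><..} f = 1 - integral {a..\<tau>} f"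
  using ccdf_has_integral(2) by blast

lemma ccdf_nonneg: "integral {\<tau><..} f \<ge> 0"
  using ccdf_has_integral(2)[of "min \<tau> 0" \<tau>] nonneg
  by (metis has_integral_nonneg integral_unique min.cobounded1 min.cobounded2)

lemma ccdf_le_one: "integral {\<tau><..} f \<le> 1"
  using ccdf_eq[of "min \<tau> 0" \<tau>] ccdf_has_integral(1)[of "min \<tau> 0" \<tau>] integral_nonneg nonneg
  by force

lemma ccdf_antimono:
  assumes "\<tau> \<le> \<tau>'"
  shows "integral {\<tau>'<..} f \<le> integral {\<tau><..} f"
proof -
  define a where "a = min \<tau> 0"
  have "a \<le> 0" "a \<le> \<tau>" "a \<le> \<tau>'"
    using assms by (auto simp: a_def)
  then show ?thesis
    using ccdf_eq ccdf_has_integral(1) integral_subset_le[of "{a..\<tau>}" "{a..\<tau>'}" f] assms nonneg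
    by auto
qed

lemma ccdf_neg: "\<tau> < 0 \<Longrightarrow> integral {\<tau><..} f = 1"
  using ccdf_eq[of \<tau> \<tau>] by simp

lemma isCont_ccdf: "isCont (\<lambda>\<tau>. integral {\<tau><..} f) \<tau>"
proof -
  define b where "b = \<bar>\<tau>\<bar> + 1"
  have "continuous_on {-b..b} (\<lambda>x. integral {-b..x} f)"
    using ccdf_has_integral(1)[of "-b" b]
    by (intro indefinite_integral_continuous_1) (simp add: b_def)
  then have "continuous_on {-b..b} (\<lambda>x. 1 - integral {-b..x} f)"
    by (intro continuous_intros)
  then have "continuous_on {-b..b} (\<lambda>x. integral {x<..} f)"
    by (rule continuous_on_eq) (simp add: ccdf_eq[of "-b"] b_def)
  moreover have "\<tau> \<in> interior {-b..b}"
    by (auto simp: b_def)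
  ultimately show ?thesis
    using continuous_on_interior by blast
qed

end

section \<open>The normalized delay and its potential \<open>beta\<close>\<close>

definition wait_fraction :: "real \<Rightarrow> real \<Rightarrow> real" where
  "wait_fraction c s = (if s \<le> c then 0 else 1 - c / s)"

lemma delay_eq_wait_fraction: "delay T c s = T * wait_fraction c s"
  by (simp add: delay_def wait_fraction_def)

lemma beta_eq_integral: "beta c s = integral {0..s} (wait_fraction c)"
  by (simp add: beta_def wait_fraction_def[abs_def])

context
  fixes c :: real
  assumes c_pos: "c > 0"
begin

lemma wait_fraction_nonneg: "wait_fraction c s \<ge> 0"
  and wait_fraction_less_one: "wait_fraction c s < 1"
  using c_pos by (auto simp: wait_fraction_def)

lemma wait_fraction_eq_0: "s \<le> 0 \<Longrightarrow> wait_fraction c s = 0"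
  using c_pos by (simp add: wait_fraction_def)

lemma isCont_wait_fraction: "isCont (wait_fraction c) s"
proof -
  have "wait_fraction c = (\<lambda>s. 1 - c / max s c)"
    using c_pos by (auto simp: fun_eq_iff wait_fraction_def max_def)
  moreover have "isCont (\<lambda>s. 1 - c / max s c) s"
    using c_pos by (intro continuous_intros) auto
  ultimately show ?thesis
    by simp
qed

lemma isCont_delay: "isCont (delay T c) s"
  unfolding delay_eq_wait_fraction[abs_def] by (intro continuous_intros isCont_wait_fraction)

lemma wait_fraction_mono: "s \<le> s' \<Longrightarrow> wait_fraction c s \<le> wait_fraction c s'"
  using c_pos by (auto simp: wait_fraction_def intro: divide_left_mono)

lemma wait_fraction_increment_le:
  assumes "s \<le> s'"
  shows "wait_fraction c s' - wait_fraction c s \<le> (s' - s) / c"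
proof (cases "s' \<le> c")
  case True
  then show ?thesis
    using assms c_pos by (simp add: wait_fraction_def)
next
  case False
  define m where "m = max s c"
  have m: "c \<le> m" "s \<le> m" "m \<le> s'"
    using False assms by (auto simp: m_def)
  have "wait_fraction c s' - wait_fraction c s = (s' - m) / s' * (c / m)"
    using False c_pos m by (auto simp: wait_fraction_def m_def field_simps)
  also have "\<dots> \<le> (s' - m) / c * 1"
    using False c_pos m by (intro mult_mono divide_left_mono) auto
  also have "\<dots> \<le> (s' - s) / c"
    using c_pos m by (simp add: divide_right_mono)
  finally show ?thesis .
qed

lemma wait_fraction_lipschitz: "\<bar>wait_fraction c x - wait_fraction c y\<bar> \<le> \<bar>x - y\<bar> / c"
proof (cases x y rule: le_cases)
  case le
  then show ?thesis
    using wait_fraction_mono[OF le] wait_fraction_increment_le[OF le] by simp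
next
  case ge
  then show ?thesis
    using wait_fraction_mono[OF ge] wait_fraction_increment_le[OF ge] by simp
qed

lemma lipschitz_on_delay: "(T / c)-lipschitz_on UNIV (delay T c)" if "T \<ge> 0"
proof (rule lipschitz_onI)
  fix x y
  have "\<bar>delay T c x - delay T c y\<bar> = T * \<bar>wait_fraction c x - wait_fraction c y\<bar>"
    using that by (simp add: delay_eq_wait_fraction abs_mult flip: right_diff_distrib)
  also have "\<dots> \<le> T * (\<bar>x - y\<bar> / c)"
    using wait_fraction_lipschitz that by (rule mult_left_mono)
  finally show "dist (delay T c x) (delay T c y) \<le> T / c * dist x y"
    by (simp add: dist_real_def)
qed (use that c_pos in simp)

lemma wait_fraction_cocoercive:
  "c * (wait_fraction c x - wait_fraction c y)^2
     \<le> (wait_fraction c x - wait_fraction c y) * (x - y)"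
proof -
  have ordered: "c * (wait_fraction c b - wait_fraction c a)^2
                   \<le> (wait_fraction c b - wait_fraction c a) * (b - a)" if "a \<le> b" for a b
  proof -
    let ?d = "wait_fraction c b - wait_fraction c a"
    have "c * ?d \<le> b - a"
      using wait_fraction_increment_le[OF that] c_pos by (simp add: field_simps)
    then have "?d * (c * ?d) \<le> ?d * (b - a)"
      using wait_fraction_mono[OF that] by (intro mult_left_mono) auto
    then show ?thesis
      by (simp add: power2_eq_square algebra_simps)
  qed
  have swap: "(wait_fraction c x - wait_fraction c y) * (x - y)
              = (wait_fraction c y - wait_fraction c x) * (y - x)"
    by (simp add: algebra_simps)
  show ?thesis
    using ordered[of x y] ordered[of y x] unfolding swap
    by (cases x y rule: le_cases) (simp_all add: power2_commute)
qed

lemma beta_eq_integral_from: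
  assumes "a \<le> 0" "a \<le> s"
  shows "beta c s = integral {a..s} (wait_fraction c)"
proof -
  have vanish: "integral {a..b} (wait_fraction c) = 0" if "b \<le> 0" for b
    using wait_fraction_eq_0 that by (subst integral_cong[where g = "\<lambda>_. 0"]) auto
  show ?thesis
  proof (cases "s \<le> 0")
    case True
    then show ?thesis
      using vanish by (cases "s = 0") (auto simp: beta_eq_integral)
  next
    case False
    have "continuous_on {a..s} (wait_fraction c)"
      by (simp add: continuous_at_imp_continuous_on isCont_wait_fraction)
    then have "integral {a..0} (wait_fraction c) + integral {0..s} (wait_fraction c)
               = integral {a..s} (wait_fraction c)"
      using False assms integrable_continuous_interval
      by (intro Henstock_Kurzweil_Integration.integral_combine) auto
    then show ?thesis
      using vanish[of 0] by (simp add: beta_eq_integral)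
  qed
qed

lemma has_real_derivative_beta: "(beta c has_real_derivative wait_fraction c s) (at s)"
proof -
  define a where "a = min s 0 - 1"
  define b where "b = s + 1"
  have "((\<lambda>x. integral {a..x} (wait_fraction c)) has_real_derivative wait_fraction c s)
          (at s within {a..b})"
    by (rule integral_has_real_derivative)
       (auto simp: a_def b_def continuous_at_imp_continuous_on isCont_wait_fraction)
  then have "((\<lambda>x. integral {a..x} (wait_fraction c)) has_real_derivative wait_fraction c s) (at s)"
    by (rule at_within_interior[THEN subst, rotated]) (auto simp: a_def b_def)
  then show ?thesis
    by (rule has_field_derivative_transform_within_open[where S = "{a<..}"])
       (auto simp: a_def beta_eq_integral_from[of "min s 0 - 1"])
qed

lemma beta_above_tangent: "beta c x + wait_fraction c x * (y - x) \<le> beta c y"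
proof -
  have "convex_on UNIV (beta c)"
    using has_real_derivative_beta wait_fraction_mono
    by (intro convex_on_realI[where f' = "wait_fraction c"]) auto
  then show ?thesis
    using convex_on_imp_above_tangent[OF _ _ _ _ has_real_derivative_beta, of x y]
    by (simp add: algebra_simps)
qed

end

section \<open>Soft-min and logit split\<close>

lemma sum_exp_pos: "(\<Sum>k\<in>(UNIV::'s::finite set). exp (a k :: real)) > 0"
  by (rule sum_pos) auto

lemma logit_pos: "logit eps kap mu j > 0"
  unfolding logit_def using sum_exp_pos by (intro divide_pos_pos) auto

lemma sum_logit: "(\<Sum>j\<in>UNIV. logit eps kap mu j) = 1"
  using sum_exp_pos[of "\<lambda>k. - (kap k + mu k) / eps"]
  by (simp add: logit_def sum_divide_distrib[symmetric])

lemma logit_le_one: "logit eps kap mu j \<le> 1"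
  using member_le_sum[of j UNIV "logit eps kap mu"] logit_pos sum_logit
  by (metis UNIV_I finite less_imp_le)

lemma eps_ln_logit:
  assumes "eps > 0"
  shows "eps * ln (logit eps kap mu j) = softmin eps kap mu - kap j - mu j"
  using assms sum_exp_pos[of "\<lambda>k. - (kap k + mu k) / eps"]
  by (simp add: logit_def softmin_def ln_div field_simps)

lemma softmin_le_linearization:
  assumes eps: "eps > 0"
  shows "softmin eps kap nu \<le> softmin eps kap mu + (\<Sum>j\<in>UNIV. logit eps kap mu j * (nu j - mu j))"
proof -
  define S where "S = (\<Sum>k\<in>UNIV. exp (- (kap k + mu k) / eps))"
  define S' where "S' = (\<Sum>k\<in>UNIV. exp (- (kap k + nu k) / eps))"
  define d where "d k = (mu k - nu k) / eps" for k
  have S: "S > 0" "S' > 0"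
    unfolding S_def S'_def by (rule sum_exp_pos)+
  have "exp (\<Sum>k\<in>UNIV. logit eps kap mu k * d k) \<le> (\<Sum>k\<in>UNIV. logit eps kap mu k * exp (d k))"
    using convex_on_sum[OF _ _ exp_convex, of UNIV "logit eps kap mu" d]
    by (simp add: sum_logit less_imp_le[OF logit_pos])
  also have "\<dots> = (\<Sum>k\<in>UNIV. exp (- (kap k + nu k) / eps) / S)"
  proof (rule sum.cong)
    fix k
    have "- (kap k + mu k) / eps + d k = - (kap k + nu k) / eps"
      using eps by (simp add: d_def field_simps)
    then show "logit eps kap mu k * exp (d k) = exp (- (kap k + nu k) / eps) / S"
      unfolding logit_def S_def[symmetric] by (metis exp_add times_divide_eq_left)
  qed simp
  also have "\<dots> = S' / S"
    by (simp add: S'_def sum_divide_distrib)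
  finally have "(\<Sum>k\<in>UNIV. logit eps kap mu k * d k) \<le> ln (S' / S)"
    using S by (simp add: ln_ge_iff)
  then have "eps * (\<Sum>k\<in>UNIV. logit eps kap mu k * d k) \<le> eps * (ln S' - ln S)"
    using S eps by (simp add: ln_div)
  moreover have "eps * (\<Sum>k\<in>UNIV. logit eps kap mu k * d k)
                 = - (\<Sum>j\<in>UNIV. logit eps kap mu j * (nu j - mu j))"
    unfolding sum_distrib_left sum_negf[symmetric] d_def using eps
    by (intro sum.cong) (simp_all add: field_simps)
  ultimately show ?thesis
    unfolding softmin_def S_def[symmetric] S'_def[symmetric] by (simp add: algebra_simps)
qed

lemma tendsto_softmin:
  assumes "eps > 0" "\<And>k. ((\<lambda>t. mu t k) \<longlongrightarrow> m k) F"
  shows "((\<lambda>t. softmin eps kap (mu t)) \<longlongrightarrow> softmin eps kap m) F"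
  unfolding softmin_def using assms sum_exp_pos[of "\<lambda>k. - (kap k + m k) / eps"]
  by (intro tendsto_intros) auto

lemma tendsto_logit:
  assumes "eps > 0" "\<And>k. ((\<lambda>t. mu t k) \<longlongrightarrow> m k) F"
  shows "((\<lambda>t. logit eps kap (mu t) j) \<longlongrightarrow> logit eps kap m j) F"
  unfolding logit_def using assms sum_exp_pos[of "\<lambda>k. - (kap k + m k) / eps"]
  by (intro tendsto_intros) auto

section \<open>Scalar optimality facts\<close>

lemma xlogx_rel_above_tangent:
  fixes x y r :: real
  assumes "x > 0" "r > 0" "y \<ge> 0" "y \<noteq> x"
  shows "xlogx_rel x r + (ln (x / r) + 1) * (y - x) < xlogx_rel y r"
proof (cases "y = 0")
  case True
  then show ?thesis
    using assms by (simp add: xlogx_rel_def algebra_simps)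
next
  case False
  then have "y > 0"
    using assms by simp
  then have "y * (ln x - ln y) < x - y"
    using ln_diff_less[of x y] assms by (simp add: field_simps)
  then show ?thesis
    using assms \<open>y > 0\<close> by (simp add: xlogx_rel_def ln_div algebra_simps)
qed

lemma delay_supergradient:
  fixes T c F m :: real
  assumes T: "T > 0" and c: "c > 0" and m: "0 \<le> m"
  defines "m0 \<equiv> delay T c (T * F)"
  shows "(m - m0) * F \<le> c * (m - m0) / (T - m0)"
proof (cases "T * F \<le> c")
  case True
  then have "m0 = 0"
    by (simp add: m0_def delay_def)
  moreover have "m * F \<le> m * (c / T)"
    using True T m by (intro mult_left_mono) (auto simp: field_simps)
  ultimately show ?thesis
    by (simp add: ac_simps)
next
  case False
  then have "c / (T - m0) = F"
    using T c by (auto simp: m0_def delay_def field_simps)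
  then show ?thesis
    by (metis mult.commute times_divide_eq_left order.refl)
qed

lemma delay_maximizes:
  fixes T c F m :: real
  assumes T: "T > 0" and c: "c > 0" and m: "0 \<le> m" "m < T" "m \<noteq> delay T c (T * F)"
  shows "m * F + c * ln (1 - m / T)
           < delay T c (T * F) * F + c * ln (1 - delay T c (T * F) / T)"
proof -
  define m0 where "m0 = delay T c (T * F)"
  have "m0 < T"
    using T c by (auto simp: m0_def delay_def)
  have "1 - m / T = (T - m) / T" "1 - m0 / T = (T - m0) / T"
    using T by (simp_all add: field_simps)
  then have "ln (1 - m / T) - ln (1 - m0 / T) = ln (T - m) - ln (T - m0)"
    using T m \<open>m0 < T\<close> by (simp add: ln_div)
  also have "\<dots> < (m0 - m) / (T - m0)"
    using ln_diff_less[of "T - m" "T - m0"] m \<open>m0 < T\<close> by (simp add: m0_def)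
  finally have "c * (ln (1 - m / T) - ln (1 - m0 / T)) < c * ((m0 - m) / (T - m0))"
    using c by (rule mult_strict_left_mono)
  moreover have "(m - m0) * F \<le> c * (m - m0) / (T - m0)"
    using delay_supergradient[OF T c m(1)] by (simp add: m0_def)
  ultimately show ?thesis
    unfolding m0_def[symmetric] by (simp add: algebra_simps diff_divide_distrib)
qed

lemma strictly_concave_on_minimizer_unique:
  fixes U :: "real \<Rightarrow> real"
  assumes U: "strictly_concave_on S U" and S: "x \<in> S" "y \<in> S"
    and min: "\<And>z. z \<in> S \<Longrightarrow> a * x - U x \<le> a * z - U z"
    and y: "a * y - U y \<le> a * x - U x"
  shows "y = x"
proof (rule ccontr)
  assume "y \<noteq> x"
  define z where "z = (1/2) * y + (1 - 1/2) * x"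
  have "convex S"
    using U by (simp add: strictly_concave_on_def)
  then have "z \<in> S"
    using convexD[OF _ S(2) S(1), of "1/2" "1 - 1/2"] by (simp add: z_def)
  moreover have "U z > (1/2) * U y + (1 - 1/2) * U x"
    using U S \<open>y \<noteq> x\<close> unfolding strictly_concave_on_def z_def
    by (metis field_sum_of_halves half_gt_zero less_add_same_cancel1 zero_less_one)
  ultimately show False
    using min[of z] y by (simp add: z_def algebra_simps)
qed

lemma saddle_point_unique_if_strict:
  fixes W :: "'a \<Rightarrow> 'b \<Rightarrow> real"
  assumes max0: "\<And>mu. mu \<in> B \<Longrightarrow> mu \<noteq> mu0 \<Longrightarrow> W r0 mu < W r0 mu0"
    and min0: "\<And>r. r \<in> A \<Longrightarrow> W r0 mu0 \<le> W r mu0"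
    and min0_unique: "\<And>r. r \<in> A \<Longrightarrow> W r mu0 \<le> W r0 mu0 \<Longrightarrow> r = r0"
    and mem: "r0 \<in> A" "mu0 \<in> B" "r1 \<in> A" "mu1 \<in> B"
    and saddle1: "\<And>r mu. r \<in> A \<Longrightarrow> mu \<in> B \<Longrightarrow> W r1 mu \<le> W r1 mu1 \<and> W r1 mu1 \<le> W r mu1"
  shows "r1 = r0 \<and> mu1 = mu0"
proof -
  have chain: "W r1 mu0 \<le> W r1 mu1" "W r1 mu1 \<le> W r0 mu1" "W r0 mu0 \<le> W r1 mu0"
    using saddle1[of r0 mu0] min0[of r1] mem by auto
  have "mu1 = mu0"
    using max0[of mu1] chain mem by fastforce
  then show ?thesis
    using min0_unique[of r1] chain mem by simp
qed

section \<open>Scalar differential inequalities\<close>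

lemma has_real_derivative_le_imp_increment_le:
  fixes h h' :: "real \<Rightarrow> real"
  assumes deriv: "\<And>t. a \<le> t \<Longrightarrow> (h has_real_derivative h' t) (at t within {a..})"
    and su: "a \<le> s" "s \<le> u" and bound: "\<And>t. s \<le> t \<Longrightarrow> t \<le> u \<Longrightarrow> h' t \<le> K"
  shows "h u - h s \<le> K * (u - s)"
proof -
  have "(h has_real_derivative h' t) (at t within {s..u})" if "s \<le> t" for t
    using su that by (intro has_field_derivative_subset[OF deriv]) auto
  then have "(h has_derivative (*) (h' t)) (at t within {s..u})" if "s \<le> t" for t
    using that by (simp add: has_field_derivative_imp_has_derivative)
  then obtain t where "t \<in> {s..u}" "h u - h s = h' t * (u - s)"
    using mvt_very_simple[OF su(2), of h "\<lambda>t. (*) (h' t)"] by auto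
  then show ?thesis
    using bound su by (simp add: mult_right_mono)
qed

lemma linear_relaxation_le:
  fixes x u :: "real \<Rightarrow> real"
  assumes T: "T > 0"
    and deriv: "\<And>t. t0 \<le> t \<Longrightarrow> (x has_real_derivative u t - x t / T) (at t within {t0..})"
    and bound: "\<And>t. t0 \<le> t \<Longrightarrow> u t \<le> a" and t: "t0 \<le> t"
  shows "x t - a * T \<le> (x t0 - a * T) * exp ((t0 - t) / T)"
proof -
  define w where "w s = (x s - a * T) * exp (s / T)" for s
  have "(w has_real_derivative (u s - a) * exp (s / T)) (at s within {t0..})" if "t0 \<le> s" for s
  proof -
    have "(w has_real_derivative
            (u s - x s / T) * exp (s / T) + (x s - a * T) * (exp (s / T) * (1 / T)))
            (at s within {t0..})"
      unfolding w_def using T by (auto intro!: derivative_eq_intros deriv that)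
    moreover have "(u s - x s / T) * exp (s / T) + (x s - a * T) * (exp (s / T) * (1 / T))
                   = (u s - a) * exp (s / T)"
      using T by (simp add: field_simps)
    ultimately show ?thesis
      by simp
  qed
  moreover have "(u s - a) * exp (s / T) \<le> 0" if "t0 \<le> s" for s
    using bound[OF that] by (simp add: mult_nonpos_nonneg)
  ultimately have "w t - w t0 \<le> 0 * (t - t0)"
    using t
    by (intro has_real_derivative_le_imp_increment_le[where h' = "\<lambda>s. (u s - a) * exp (s / T)"])
       auto
  then have "(x t - a * T) * exp (t / T) \<le> (x t0 - a * T) * exp ((t0 - t) / T) * exp (t / T)"
    by (simp add: w_def mult.assoc flip: exp_add add_divide_distrib)
  then show ?thesis
    by simp
qed

lemma linear_relaxation_ge:
  fixes x u :: "real \<Rightarrow> real"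
  assumes T: "T > 0"
    and deriv: "\<And>t. t0 \<le> t \<Longrightarrow> (x has_real_derivative u t - x t / T) (at t within {t0..})"
    and bound: "\<And>t. t0 \<le> t \<Longrightarrow> a \<le> u t" and t: "t0 \<le> t"
  shows "(x t0 - a * T) * exp ((t0 - t) / T) \<le> x t - a * T"
proof -
  have "(\<lambda>s. - x s) t - (- a) * T \<le> ((\<lambda>s. - x s) t0 - (- a) * T) * exp ((t0 - t) / T)"
  proof (rule linear_relaxation_le[OF T _ _ t])
    show "((\<lambda>s. - x s) has_real_derivative - u s - - x s / T) (at s within {t0..})" if "t0 \<le> s" for s
      using DERIV_minus[OF deriv[OF that]] by simp
  qed (use bound in auto)
  then show ?thesis
    by (simp add: algebra_simps)
qed

lemma linear_relaxation_eventually_less: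
  fixes x u :: "real \<Rightarrow> real"
  assumes T: "T > 0"
    and deriv: "\<And>t. 0 \<le> t \<Longrightarrow> (x has_real_derivative u t - x t / T) (at t within {0..})"
    and lim: "(u \<longlongrightarrow> L) at_top" and b: "T * L < b"
  shows "eventually (\<lambda>t. x t < b) at_top"
proof -
  define a where "a = (L + b / T) / 2"
  have a: "L < a" "a * T < b"
    using T b by (simp_all add: a_def field_simps)
  obtain t0 where t0: "t0 \<ge> 0" "\<And>t. t0 \<le> t \<Longrightarrow> u t \<le> a"
    using order_tendstoD(2)[OF lim a(1)] unfolding eventually_at_top_linorder
    by (metis less_imp_le max.boundedE max.cobounded1)
  have relax: "x t - a * T \<le> (x t0 - a * T) * exp ((t0 - t) / T)" if "t0 \<le> t" for t
    using that t0 T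
    by (intro linear_relaxation_le[where u = u])
       (auto intro: has_field_derivative_subset[OF deriv] simp: subset_eq)
  have "((\<lambda>t. (x t0 - a * T) * exp ((t0 - t) / T)) \<longlongrightarrow> 0) at_top"
    using T by real_asymp
  then have "eventually (\<lambda>t. (x t0 - a * T) * exp ((t0 - t) / T) < b - a * T) at_top"
    using a by (intro order_tendstoD) auto
  then show ?thesis
    using eventually_ge_at_top[of t0] by eventually_elim (use relax in force)
qed

lemma linear_relaxation_tendsto:
  fixes x u :: "real \<Rightarrow> real"
  assumes T: "T > 0"
    and deriv: "\<And>t. 0 \<le> t \<Longrightarrow> (x has_real_derivative u t - x t / T) (at t within {0..})"
    and lim: "(u \<longlongrightarrow> L) at_top"
  shows "(x \<longlongrightarrow> T * L) at_top"
proof (rule order_tendstoI)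
  show "eventually (\<lambda>t. x t < b) at_top" if "T * L < b" for b
    using linear_relaxation_eventually_less[OF T deriv lim that] .
  show "eventually (\<lambda>t. b < x t) at_top" if "b < T * L" for b
  proof -
    have "eventually (\<lambda>t. - x t < - b) at_top"
    proof (rule linear_relaxation_eventually_less[OF T])
      show "((\<lambda>t. - x t) has_real_derivative - u t - - x t / T) (at t within {0..})" if "0 \<le> t" for t
        using DERIV_minus[OF deriv[OF that]] by simp
    qed (use tendsto_minus[OF lim] that in auto)
    then show ?thesis
      by simp
  qed
qed

lemma dissipation_antimono:
  fixes V V' z :: "real \<Rightarrow> real"
  assumes deriv: "\<And>t. 0 \<le> t \<Longrightarrow> (V has_real_derivative V' t) (at t within {0..})"
    and dissipation: "\<And>t. 0 \<le> t \<Longrightarrow> V' t \<le> - k * (z t)^2" and k: "k \<ge> 0"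
    and st: "0 \<le> s" "s \<le> t"
  shows "V t \<le> V s"
proof -
  have "V' u \<le> 0" if "0 \<le> u" for u
    using dissipation[OF that] mult_nonneg_nonneg[OF k zero_le_power2[of "z u"]] by linarith
  then show ?thesis
    using has_real_derivative_le_imp_increment_le[OF deriv st, of 0] st by auto
qed

lemma dissipation_over_window:
  fixes V V' z :: "real \<Rightarrow> real"
  assumes deriv: "\<And>t. 0 \<le> t \<Longrightarrow> (V has_real_derivative V' t) (at t within {0..})"
    and dissipation: "\<And>t. 0 \<le> t \<Longrightarrow> V' t \<le> - k * (z t)^2" and k: "k \<ge> 0"
    and lipschitz: "L-lipschitz_on {0..} z"
    and t: "0 \<le> t" "e \<le> \<bar>z t\<bar>" and e: "e > 0"
  defines "\<delta> \<equiv> e / (2 * (L + 1))"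
  shows "V (t + \<delta>) \<le> V t - k * (e / 2)^2 * \<delta>"
proof -
  have L: "L \<ge> 0"
    using lipschitz by (rule lipschitz_on_nonneg)
  have "V' s \<le> - (k * (e / 2)^2)" if s: "t \<le> s" "s \<le> t + \<delta>" for s
  proof -
    have "\<bar>z s - z t\<bar> \<le> L * (s - t)"
      using lipschitz_onD[OF lipschitz, of s t] s t by (simp add: dist_real_def)
    also have "\<dots> \<le> (L + 1) * \<delta>"
      using s L by (intro mult_mono) auto
    also have "\<dots> = e / 2"
      using L by (simp add: \<delta>_def field_simps)
    finally have "\<bar>e / 2\<bar> \<le> \<bar>z s\<bar>"
      using t e by linarith
    then have "(e / 2)^2 \<le> (z s)^2"
      by (simp only: abs_le_square_iff)
    then have "k * (e / 2)^2 \<le> k * (z s)^2"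
      using k by (rule mult_left_mono)
    then show ?thesis
      using dissipation[of s] s t by linarith
  qed
  moreover have "\<delta> > 0"
    using e L by (simp add: \<delta>_def)
  ultimately have "V (t + \<delta>) - V t \<le> - (k * (e / 2)^2) * (t + \<delta> - t)"
    using t by (intro has_real_derivative_le_imp_increment_le[OF deriv]) auto
  then show ?thesis
    by simp
qed

text \<open>A Barbalat-type argument: \<open>\<bar>z\<bar> \<ge> e\<close> at a late time would cost a fixed amount of \<open>V\<close> over a
  window of fixed length, which an antitone \<open>V\<close> that is bounded below cannot afford.\<close>
lemma dissipation_tendsto_zero:
  fixes V V' z :: "real \<Rightarrow> real"
  assumes deriv: "\<And>t. 0 \<le> t \<Longrightarrow> (V has_real_derivative V' t) (at t within {0..})"
    and bounded: "\<And>t. 0 \<le> t \<Longrightarrow> Vmin \<le> V t"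
    and dissipation: "\<And>t. 0 \<le> t \<Longrightarrow> V' t \<le> - k * (z t)^2" and k: "k > 0"
    and lipschitz: "L-lipschitz_on {0..} z"
  shows "(z \<longlongrightarrow> 0) at_top"
proof (rule tendstoI)
  fix e :: real
  assume e: "e > 0"
  define l where "l = Inf (V ` {0..})"
  have bdd: "bdd_below (V ` {0..})"
    using bounded by (auto simp: bdd_below_def)
  define \<delta> where "\<delta> = e / (2 * (L + 1))"
  have pos: "\<delta> > 0" "k * (e / 2)^2 * \<delta> > 0"
    using e k lipschitz_on_nonneg[OF lipschitz] by (simp_all add: \<delta>_def)
  obtain N where N: "N \<ge> 0" "V N < l + k * (e / 2)^2 * \<delta>"
    using cInf_less_iff[OF _ bdd, of "l + k * (e / 2)^2 * \<delta>"] pos unfolding l_def by fastforce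
  have small: "\<bar>z t\<bar> < e" if t: "N \<le> t" for t
  proof (rule ccontr)
    assume "\<not> \<bar>z t\<bar> < e"
    then have "V (t + \<delta>) \<le> V t - k * (e / 2)^2 * \<delta>"
      using dissipation_over_window[OF deriv dissipation _ lipschitz] k e t N by (simp add: \<delta>_def)
    also have "\<dots> < l"
      using dissipation_antimono[OF deriv dissipation _ N(1) t] k N by simp
    also have "l \<le> V (t + \<delta>)"
      unfolding l_def using bdd t N pos by (intro cInf_lower) auto
    finally show False
      by simp
  qed
  show "eventually (\<lambda>t. dist (z t) 0 < e) at_top"
    using eventually_ge_at_top[of N] by eventually_elim (simp add: small dist_real_def)
qed

section \<open>The network and its equilibrium\<close>

locale elastic_network =
  fixes T eps :: real
    and c :: "'s::finite \<Rightarrow> real"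
    and kap :: "'l::finite \<Rightarrow> 's \<Rightarrow> real"
    and rbar :: "'l \<Rightarrow> real"
    and p :: "'l \<Rightarrow> real \<Rightarrow> real"
    and f :: "'l \<Rightarrow> real \<Rightarrow> real"
    and U :: "'l \<Rightarrow> real \<Rightarrow> real"
  assumes T_pos: "T > 0" and eps_pos: "eps > 0"
    and c_pos: "\<And>j. c j > 0"
    and rbar_pos: "\<And>i. rbar i > 0"
    and density: "\<And>i. nonneg_density (f i)"
    and p_ccdf: "\<And>i \<tau>. p i \<tau> = integral {\<tau><..} (f i)"
    and U_mono: "\<And>i. mono_on {0..} (U i)"
    and U_strict: "\<And>i. strictly_concave_on {0..rbar i} (U i)"
    and U_argmax: "\<And>i \<tau> r. \<tau> \<ge> 0 \<Longrightarrow> r \<ge> 0 \<Longrightarrow>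
        U i r - \<tau> * r \<le> U i (rbar i * p i \<tau>) - \<tau> * (rbar i * p i \<tau>)"
begin

definition delays :: "('s \<Rightarrow> real) \<Rightarrow> 's \<Rightarrow> real" where
  "delays q = (\<lambda>k. delay T (c k) (q k))"

definition demand :: "'l \<Rightarrow> ('s \<Rightarrow> real) \<Rightarrow> real" where
  "demand i mu = rbar i * p i (softmin eps (kap i) mu)"

definition arrival :: "'s \<Rightarrow> ('s \<Rightarrow> real) \<Rightarrow> real" where
  "arrival j mu = (\<Sum>i\<in>UNIV. demand i mu * logit eps (kap i) mu j)"

lemma p_nonneg: "p i \<tau> \<ge> 0"
  and p_le_one: "p i \<tau> \<le> 1"
  and p_antimono: "\<tau> \<le> \<tau>' \<Longrightarrow> p i \<tau>' \<le> p i \<tau>"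
  and p_neg: "\<tau> < 0 \<Longrightarrow> p i \<tau> = 1"
  and isCont_p: "isCont (p i) \<tau>"
  using nonneg_density.ccdf_nonneg[OF density] nonneg_density.ccdf_le_one[OF density]
    nonneg_density.ccdf_antimono[OF density] nonneg_density.ccdf_neg[OF density]
    nonneg_density.isCont_ccdf[OF density]
  by (simp_all add: p_ccdf[abs_def])

lemma delays_range: "0 \<le> delays q j" "delays q j < T"
  using wait_fraction_nonneg[OF c_pos] wait_fraction_less_one[OF c_pos] T_pos
  by (simp_all add: delays_def delay_eq_wait_fraction)

lemma demand_nonneg: "demand i mu \<ge> 0"
  using p_nonneg rbar_pos[of i] by (simp add: demand_def)

lemma demand_le_rbar: "demand i mu \<le> rbar i"
  using mult_left_mono[OF p_le_one, of "rbar i"] rbar_pos[of i] by (simp add: demand_def)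

lemma arrival_nonneg: "arrival j mu \<ge> 0"
  unfolding arrival_def using demand_nonneg less_imp_le[OF logit_pos]
  by (intro sum_nonneg mult_nonneg_nonneg) auto

lemma arrival_le_total: "arrival j mu \<le> (\<Sum>i\<in>UNIV. rbar i)"
  unfolding arrival_def
proof (rule sum_mono)
  fix i
  have "demand i mu * logit eps (kap i) mu j \<le> demand i mu"
    using mult_left_mono[OF logit_le_one demand_nonneg] by simp
  then show "demand i mu * logit eps (kap i) mu j \<le> rbar i"
    using demand_le_rbar[of i mu] by linarith
qed

lemma tendsto_demand:
  assumes "\<And>k. ((\<lambda>t. mu t k) \<longlongrightarrow> m k) F"
  shows "((\<lambda>t. demand i (mu t)) \<longlongrightarrow> demand i m) F"
  unfolding demand_def
  by (intro tendsto_intros isCont_tendsto_compose[OF isCont_p] tendsto_softmin eps_pos assms)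

lemma tendsto_arrival:
  assumes "\<And>k. ((\<lambda>t. mu t k) \<longlongrightarrow> m k) F"
  shows "((\<lambda>t. arrival j (mu t)) \<longlongrightarrow> arrival j m) F"
  unfolding arrival_def
  by (intro tendsto_intros tendsto_demand tendsto_logit eps_pos assms)

lemma tendsto_delays:
  assumes "\<And>k. ((\<lambda>t. q t k) \<longlongrightarrow> q0 k) F"
  shows "((\<lambda>t. delays (q t) j) \<longlongrightarrow> delays q0 j) F"
  unfolding delays_def using assms by (intro isCont_tendsto_compose[OF isCont_delay] c_pos)

lemma demand_logit_monotone:
  "demand i mu * (\<Sum>j\<in>UNIV. logit eps (kap i) mu j * (mu j - nu j))
     \<le> demand i nu * (\<Sum>j\<in>UNIV. logit eps (kap i) nu j * (mu j - nu j))"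
proof -
  \<comment> \<open>concavity of the soft-min puts its increment \<open>a\<close> between the two linearizations,
    and the demand moves against \<open>a\<close>\<close>
  define a where "a = softmin eps (kap i) mu - softmin eps (kap i) nu"
  have "(\<Sum>j\<in>UNIV. logit eps (kap i) mu j * (nu j - mu j))
        = - (\<Sum>j\<in>UNIV. logit eps (kap i) mu j * (mu j - nu j))"
    by (simp add: sum_negf[symmetric] algebra_simps)
  then have A: "(\<Sum>j\<in>UNIV. logit eps (kap i) mu j * (mu j - nu j)) \<le> a"
    using softmin_le_linearization[OF eps_pos, of "kap i" nu mu] by (simp add: a_def)
  have B: "a \<le> (\<Sum>j\<in>UNIV. logit eps (kap i) nu j * (mu j - nu j))"
    using softmin_le_linearization[OF eps_pos, of "kap i" mu nu] by (simp add: a_def)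
  have "a * (demand i mu - demand i nu) \<le> 0"
  proof (cases "a \<ge> 0")
    case True
    then have "demand i mu \<le> demand i nu"
      using p_antimono rbar_pos[of i] by (simp add: a_def demand_def)
    then show ?thesis
      using True by (simp add: mult_nonneg_nonpos)
  next
    case False
    then have "demand i nu \<le> demand i mu"
      using p_antimono rbar_pos[of i] by (simp add: a_def demand_def)
    then show ?thesis
      using False by (simp add: mult_nonpos_nonneg)
  qed
  then show ?thesis
    using mult_left_mono[OF A demand_nonneg[of i mu]] mult_left_mono[OF B demand_nonneg[of i nu]]
    by (simp add: algebra_simps)
qed

lemma arrival_monotone: "(\<Sum>j\<in>UNIV. (mu j - nu j) * (arrival j mu - arrival j nu)) \<le> 0"
proof -
  have "(\<Sum>j\<in>UNIV. (mu j - nu j) * (arrival j mu - arrival j nu))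
        = (\<Sum>j\<in>UNIV. \<Sum>i\<in>UNIV. demand i mu * (logit eps (kap i) mu j * (mu j - nu j))
                                - demand i nu * (logit eps (kap i) nu j * (mu j - nu j)))"
    unfolding arrival_def
    by (rule sum.cong) (simp_all add: sum_distrib_left sum_subtractf[symmetric] algebra_simps)
  also have "\<dots> = (\<Sum>i\<in>UNIV. demand i mu * (\<Sum>j\<in>UNIV. logit eps (kap i) mu j * (mu j - nu j))
                           - demand i nu * (\<Sum>j\<in>UNIV. logit eps (kap i) nu j * (mu j - nu j)))"
    by (subst sum.swap) (simp add: sum_subtractf sum_distrib_left)
  also have "\<dots> \<le> 0"
    using demand_logit_monotone by (simp add: sum_nonpos)
  finally show ?thesis .
qed

lemma equilibrium_exists: "\<exists>qs. \<forall>j. qs j = T * arrival j (delays qs)"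
proof -
  define \<Phi> :: "real^'s \<Rightarrow> real^'s" where
    "\<Phi> v = (\<chi> j. T * arrival j (delays (\<lambda>k. v $ k)))" for v
  define S :: "(real^'s) set" where "S = cbox 0 (\<chi> j. T * (\<Sum>i\<in>UNIV. rbar i))"
  have "(\<Sum>i\<in>UNIV. rbar i) \<ge> 0"
    by (intro sum_nonneg) (simp add: less_imp_le rbar_pos)
  then have "(0::real^'s) \<in> S"
    using T_pos by (simp add: S_def mem_box_cart)
  moreover have "continuous_on S \<Phi>"
  proof -
    have "isCont (\<lambda>v. T * arrival j (delays (\<lambda>k. v $ k))) v" for j and v :: "real^'s"
      unfolding isCont_def
      by (intro tendsto_intros tendsto_arrival tendsto_delays tendsto_vec_nth tendsto_ident_at)
    then show ?thesis
      unfolding \<Phi>_def by (intro continuous_on_vec_lambda continuous_at_imp_continuous_on) auto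
  qed
  moreover have "\<Phi> \<in> S \<rightarrow> S"
    using T_pos arrival_nonneg arrival_le_total
    by (auto simp: \<Phi>_def S_def mem_box_cart intro!: mult_left_mono)
  ultimately obtain v where "\<Phi> v = v"
    using brouwer[of S \<Phi>] by (auto simp: S_def)
  then have "\<forall>j. v $ j = T * arrival j (delays (\<lambda>k. v $ k))"
    by (metis \<Phi>_def vec_lambda_beta)
  then show ?thesis
    by blast
qed

end

locale elastic_equilibrium = elastic_network T eps c kap rbar p f U
  for T eps :: real
    and c :: "'s::finite \<Rightarrow> real"
    and kap :: "'l::finite \<Rightarrow> 's \<Rightarrow> real"
    and rbar :: "'l \<Rightarrow> real"
    and p f U :: "'l \<Rightarrow> real \<Rightarrow> real" +
  fixes qs :: "'s \<Rightarrow> real"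
  assumes qs_fixed_point: "\<And>j. qs j = T * arrival j (delays qs)"
begin

definition mus :: "'s \<Rightarrow> real" where
  "mus = delays qs"

definition rs :: "'l \<Rightarrow> real" where
  "rs i = demand i mus"

definition Xs :: "'l \<Rightarrow> 's \<Rightarrow> real" where
  "Xs i j = rs i * logit eps (kap i) mus j"

lemma mus_eq: "mus j = delay T (c j) (qs j)"
  by (simp add: mus_def delays_def)

lemma mus_range: "0 \<le> mus j" "mus j < T"
  unfolding mus_def by (rule delays_range)+

lemma rs_range: "0 \<le> rs i" "rs i \<le> rbar i"
  unfolding rs_def by (rule demand_nonneg demand_le_rbar)+

lemma arrival_mus: "arrival j mus = qs j / T"
  using qs_fixed_point[of j] T_pos by (simp add: mus_def)

lemma Wfun_rs_strict_max:
  assumes mu: "\<And>j. 0 \<le> mu j \<and> mu j < T" and "mu \<noteq> mus"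
  shows "Wfun T eps kap c U rs mu < Wfun T eps kap c U rs mus"
proof -
  \<comment> \<open>linearize the soft-min at \<open>mus\<close>; what remains splits into one concave term per station\<close>
  define \<phi> where "\<phi> j m = m * arrival j mus + c j * ln (1 - m / T)" for j m
  have "(\<Sum>i\<in>UNIV. rs i * softmin eps (kap i) mu)
        \<le> (\<Sum>i\<in>UNIV. rs i * (softmin eps (kap i) mus
                               + (\<Sum>j\<in>UNIV. logit eps (kap i) mus j * (mu j - mus j))))"
    using rs_range(1) by (intro sum_mono mult_left_mono softmin_le_linearization eps_pos) auto
  also have "\<dots> = (\<Sum>i\<in>UNIV. rs i * softmin eps (kap i) mus)
                   + (\<Sum>i\<in>UNIV. \<Sum>j\<in>UNIV. rs i * logit eps (kap i) mus j * (mu j - mus j))"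
    by (simp add: sum.distrib sum_distrib_left algebra_simps)
  also have "(\<Sum>i\<in>UNIV. \<Sum>j\<in>UNIV. rs i * logit eps (kap i) mus j * (mu j - mus j))
             = (\<Sum>j\<in>UNIV. (mu j - mus j) * arrival j mus)"
    unfolding arrival_def rs_def by (subst sum.swap) (simp add: sum_distrib_left algebra_simps)
  finally have "Wfun T eps kap c U rs mu
                \<le> Wfun T eps kap c U rs mus + (\<Sum>j\<in>UNIV. \<phi> j (mu j)) - (\<Sum>j\<in>UNIV. \<phi> j (mus j))"
    by (simp add: Wfun_def \<phi>_def sum.distrib sum_subtractf algebra_simps)
  moreover have "(\<Sum>j\<in>UNIV. \<phi> j (mu j)) < (\<Sum>j\<in>UNIV. \<phi> j (mus j))"
  proof (rule sum_strict_mono_ex1)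
    have strict: "\<phi> j (mu j) < \<phi> j (mus j)" if "mu j \<noteq> mus j" for j
      using delay_maximizes[OF T_pos c_pos[of j], where F = "arrival j mus" and m = "mu j"]
        mu[of j] that
      by (simp add: \<phi>_def mus_eq arrival_mus)
    show "\<forall>j\<in>UNIV. \<phi> j (mu j) \<le> \<phi> j (mus j)"
      using strict by (metis less_imp_le order.refl)
    show "\<exists>j\<in>UNIV. \<phi> j (mu j) < \<phi> j (mus j)"
      using strict \<open>mu \<noteq> mus\<close> by blast
  qed simp
  ultimately show ?thesis
    by simp
qed

lemma rs_minimizes:
  assumes "0 \<le> r" "r \<le> rbar i"
  shows "rs i * softmin eps (kap i) mus - U i (rs i) \<le> r * softmin eps (kap i) mus - U i r"
proof (cases "softmin eps (kap i) mus \<ge> 0")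
  case True
  then show ?thesis
    using U_argmax[OF True assms(1), of i] by (simp add: rs_def demand_def algebra_simps)
next
  case False
  then have "rs i = rbar i"
    by (simp add: rs_def demand_def p_neg)
  moreover have "U i r \<le> U i (rbar i)"
    using U_mono[of i] assms by (auto intro: mono_onD)
  moreover have "rbar i * softmin eps (kap i) mus \<le> r * softmin eps (kap i) mus"
    using False assms by (intro mult_right_mono_neg) auto
  ultimately show ?thesis
    by simp
qed

lemma Wfun_mus_min:
  assumes "\<And>i. 0 \<le> r i \<and> r i \<le> rbar i"
  shows "Wfun T eps kap c U rs mus \<le> Wfun T eps kap c U r mus"
  unfolding Wfun_def using rs_minimizes assms by (simp add: sum_mono)

lemma Wfun_mus_min_unique:
  assumes r: "\<And>i. 0 \<le> r i \<and> r i \<le> rbar i"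
    and le: "Wfun T eps kap c U r mus \<le> Wfun T eps kap c U rs mus"
  shows "r = rs"
proof
  fix i
  define h where "h i x = x * softmin eps (kap i) mus - U i x" for i x
  have gap: "h i (r i) - h i (rs i) \<ge> 0" for i
    using rs_minimizes r by (simp add: h_def)
  have "(\<Sum>i\<in>UNIV. h i (r i) - h i (rs i)) \<le> 0"
    using le by (simp add: Wfun_def h_def sum_subtractf)
  then have "(\<Sum>i\<in>UNIV. h i (r i) - h i (rs i)) = 0"
    using sum_nonneg[of UNIV "\<lambda>i. h i (r i) - h i (rs i)"] gap by simp
  then have "h i (r i) \<le> h i (rs i)"
    using sum_nonneg_eq_0_iff[of UNIV "\<lambda>i. h i (r i) - h i (rs i)"] gap by simp
  then show "r i = rs i"
    using strictly_concave_on_minimizer_unique[OF U_strict[of i], where a = "softmin eps (kap i) mus"]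
      rs_minimizes r[of i] rs_range[of i]
    by (simp add: h_def mult.commute)
qed

lemma Wfun_rs_max:
  assumes "\<And>j. 0 \<le> mu j \<and> mu j < T"
  shows "Wfun T eps kap c U rs mu \<le> Wfun T eps kap c U rs mus"
  using Wfun_rs_strict_max[of mu] assms by (cases "mu = mus") auto

lemma saddle_point_rs_mus: "saddle_point T eps kap c U rbar rs mus"
  unfolding saddle_point_def using rs_range mus_range Wfun_mus_min Wfun_rs_max by blast

lemma saddle_point_unique:
  assumes "saddle_point T eps kap c U rbar r mu"
  shows "r = rs \<and> mu = mus"
proof (rule saddle_point_unique_if_strict[where W = "Wfun T eps kap c U"])
  let ?A = "{r. \<forall>i. 0 \<le> r i \<and> r i \<le> rbar i}" and ?B = "{mu. \<forall>j. 0 \<le> mu j \<and> mu j < T}"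
  show "rs \<in> ?A" "mus \<in> ?B"
    using rs_range mus_range by auto
  show "r \<in> ?A" "mu \<in> ?B"
       "\<And>r' mu'. r' \<in> ?A \<Longrightarrow> mu' \<in> ?B
          \<Longrightarrow> Wfun T eps kap c U r mu' \<le> Wfun T eps kap c U r mu
            \<and> Wfun T eps kap c U r mu \<le> Wfun T eps kap c U r' mu"
    using assms unfolding saddle_point_def by auto
qed (auto intro: Wfun_rs_strict_max Wfun_mus_min Wfun_mus_min_unique)

lemma Xs_row_sum: "(\<Sum>j\<in>UNIV. Xs i j) = rs i"
  by (simp add: Xs_def sum_distrib_left[symmetric] sum_logit)

lemma Xs_col_sum: "(\<Sum>i\<in>UNIV. Xs i j) = qs j / T"
  using arrival_mus[of j] by (simp add: arrival_def Xs_def rs_def)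

lemma Xs_nonneg: "Xs i j \<ge> 0"
  unfolding Xs_def using rs_range(1) less_imp_le[OF logit_pos] by (rule mult_nonneg_nonneg)

lemma feasible_Xs: "feasible T rs Xs qs"
  by (simp add: feasible_def Xs_nonneg Xs_row_sum Xs_col_sum)

lemma feasible_queue_eq: "feasible T rs X q \<Longrightarrow> q j = T * (\<Sum>i\<in>UNIV. X i j)"
  using T_pos by (simp add: feasible_def)

lemma objective_eq:
  "objective eps kap c r X q
     = (\<Sum>i\<in>UNIV. \<Sum>j\<in>UNIV. kap i j * X i j + eps * xlogx_rel (X i j) (r i))
       + (\<Sum>j\<in>UNIV. beta (c j) (q j))"
  by (simp add: objective_def sum.distrib sum_distrib_left)

lemma entry_cost_above_tangent:
  assumes X: "feasible T rs X q" and ne: "X i j \<noteq> Xs i j"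
  shows "kap i j * Xs i j + eps * xlogx_rel (Xs i j) (rs i)
           + (softmin eps (kap i) mus + eps - mus j) * (X i j - Xs i j)
         < kap i j * X i j + eps * xlogx_rel (X i j) (rs i)"
proof -
  have X_nonneg: "\<And>j. X i j \<ge> 0"
    using X by (simp add: feasible_def)
  have "rs i \<noteq> 0"
  proof
    assume "rs i = 0"
    then have "X i j = 0"
      using X sum_nonneg_eq_0_iff[of UNIV "X i"] X_nonneg by (simp add: feasible_def)
    then show False
      using ne \<open>rs i = 0\<close> by (simp add: Xs_def)
  qed
  then have rs_pos: "rs i > 0"
    using rs_range(1)[of i] by simp
  then have "Xs i j > 0"
    by (simp add: Xs_def logit_pos)
  then have "xlogx_rel (Xs i j) (rs i) + (ln (Xs i j / rs i) + 1) * (X i j - Xs i j)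
             < xlogx_rel (X i j) (rs i)"
    using xlogx_rel_above_tangent rs_pos X_nonneg ne by blast
  from mult_strict_left_mono[OF this eps_pos]
  have "eps * xlogx_rel (Xs i j) (rs i) + (eps * ln (Xs i j / rs i) + eps) * (X i j - Xs i j)
        < eps * xlogx_rel (X i j) (rs i)"
    by (simp add: algebra_simps)
  moreover have "eps * ln (Xs i j / rs i) = softmin eps (kap i) mus - kap i j - mus j"
    using rs_pos eps_ln_logit[OF eps_pos] by (simp add: Xs_def)
  ultimately show ?thesis
    by (simp add: algebra_simps)
qed

lemma feasible_tangent_balance:
  assumes X: "feasible T rs X q"
  shows "(\<Sum>i\<in>UNIV. \<Sum>j\<in>UNIV. (softmin eps (kap i) mus + eps - mus j) * (X i j - Xs i j))
           + (\<Sum>j\<in>UNIV. mus j / T * (q j - qs j)) = 0"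
proof -
  have "(\<Sum>i\<in>UNIV. \<Sum>j\<in>UNIV. (softmin eps (kap i) mus + eps) * (X i j - Xs i j)) = 0"
    using X by (simp add: sum_distrib_left[symmetric] sum_subtractf Xs_row_sum feasible_def)
  moreover have "(\<Sum>i\<in>UNIV. \<Sum>j\<in>UNIV. mus j * (X i j - Xs i j)) = (\<Sum>j\<in>UNIV. mus j / T * (q j - qs j))"
    using X T_pos
    by (subst sum.swap) (simp add: sum_distrib_left[symmetric] sum_subtractf Xs_col_sum feasible_def
                                   diff_divide_distrib right_diff_distrib)
  ultimately show ?thesis
    by (simp add: left_diff_distrib sum_subtractf)
qed

lemma objective_strict_min:
  assumes X: "feasible T rs X q" and ne: "X \<noteq> Xs"
  shows "objective eps kap c rs Xs qs < objective eps kap c rs X q"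
proof -
  define cost where "cost i j x = kap i j * x + eps * xlogx_rel x (rs i)" for i j x
  define slope where "slope i j = softmin eps (kap i) mus + eps - mus j" for i j
  have entry_strict: "cost i j (Xs i j) + slope i j * (X i j - Xs i j) < cost i j (X i j)"
    if "X i j \<noteq> Xs i j" for i j
    unfolding cost_def slope_def by (rule entry_cost_above_tangent[OF X that])
  then have entry: "cost i j (Xs i j) + slope i j * (X i j - Xs i j) \<le> cost i j (X i j)" for i j
    by (cases "X i j = Xs i j") (auto intro: less_imp_le)
  obtain i0 j0 where "X i0 j0 \<noteq> Xs i0 j0"
    using ne by (auto simp: fun_eq_iff)
  from entry_strict[OF this]
  have "(\<Sum>j\<in>UNIV. cost i0 j (Xs i0 j) + slope i0 j * (X i0 j - Xs i0 j))
        < (\<Sum>j\<in>UNIV. cost i0 j (X i0 j))"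
    using entry by (intro sum_strict_mono_ex1) auto
  then have "(\<Sum>i\<in>UNIV. \<Sum>j\<in>UNIV. cost i j (Xs i j) + slope i j * (X i j - Xs i j))
             < (\<Sum>i\<in>UNIV. \<Sum>j\<in>UNIV. cost i j (X i j))"
    using entry by (intro sum_strict_mono_ex1) (auto intro: sum_mono)
  moreover have "beta (c j) (qs j) + mus j / T * (q j - qs j) \<le> beta (c j) (q j)" for j
    using beta_above_tangent[OF c_pos[of j], of "qs j" "q j"] T_pos
    by (simp add: mus_eq delay_eq_wait_fraction)
  then have "(\<Sum>j\<in>UNIV. beta (c j) (qs j) + mus j / T * (q j - qs j)) \<le> (\<Sum>j\<in>UNIV. beta (c j) (q j))"
    by (rule sum_mono)
  moreover have "(\<Sum>i\<in>UNIV. \<Sum>j\<in>UNIV. slope i j * (X i j - Xs i j))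
                 + (\<Sum>j\<in>UNIV. mus j / T * (q j - qs j)) = 0"
    using feasible_tangent_balance[OF X] by (simp add: slope_def)
  ultimately show ?thesis
    unfolding objective_eq cost_def[symmetric]
    by (simp add: sum.distrib)
qed

lemma objective_min:
  assumes "feasible T rs X q"
  shows "objective eps kap c rs Xs qs \<le> objective eps kap c rs X q"
proof (cases "X = Xs")
  case True
  then have "q = qs"
    using feasible_queue_eq[OF assms] T_pos by (auto simp: fun_eq_iff Xs_col_sum)
  then show ?thesis
    using True by simp
next
  case False
  then show ?thesis
    using objective_strict_min[OF assms] by simp
qed

lemma objective_min_unique:
  assumes "feasible T rs X q" "objective eps kap c rs X q \<le> objective eps kap c rs Xs qs"
  shows "X = Xs \<and> q = qs"
proof -
  have "X = Xs"
    using objective_strict_min assms by fastforce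
  moreover from this have "q = qs"
    using feasible_queue_eq[OF assms(1)] T_pos by (auto simp: fun_eq_iff Xs_col_sum)
  ultimately show ?thesis ..
qed

end

section \<open>Convergence of trajectories\<close>

locale elastic_trajectory = elastic_equilibrium T eps c kap rbar p f U qs
  for T eps :: real
    and c :: "'s::finite \<Rightarrow> real"
    and kap :: "'l::finite \<Rightarrow> 's \<Rightarrow> real"
    and rbar :: "'l \<Rightarrow> real"
    and p f U :: "'l \<Rightarrow> real \<Rightarrow> real"
    and qs :: "'s \<Rightarrow> real" +
  fixes q :: "real \<Rightarrow> 's \<Rightarrow> real"
  assumes q_init: "\<And>j. q 0 j \<ge> 0"
    and q_ode: "\<And>t j. t \<ge> 0 \<Longrightarrow>
      ((\<lambda>s. q s j) has_real_derivative arrival j (delays (q t)) - q t j / T) (at t within {0..})"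
begin

lemma queue_nonneg:
  assumes "t \<ge> 0"
  shows "q t j \<ge> 0"
proof -
  have "(q 0 j - 0 * T) * exp ((0 - t) / T) \<le> q t j - 0 * T"
    by (rule linear_relaxation_ge[OF T_pos q_ode]) (use arrival_nonneg assms in auto)
  moreover have "0 \<le> q 0 j * exp ((0 - t) / T)"
    using q_init[of j] by simp
  ultimately show ?thesis
    by simp
qed

lemma queue_bounded:
  assumes "t \<ge> 0"
  shows "q t j \<le> max (q 0 j) (T * (\<Sum>i\<in>UNIV. rbar i))"
proof -
  define R where "R = (\<Sum>i\<in>UNIV. rbar i)"
  have "q t j - R * T \<le> (q 0 j - R * T) * exp ((0 - t) / T)"
    by (rule linear_relaxation_le[OF T_pos q_ode])
       (use arrival_le_total assms in \<open>auto simp: R_def\<close>)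
  moreover have "(q 0 j - R * T) * exp ((0 - t) / T) \<le> max (q 0 j - R * T) 0"
  proof (cases "q 0 j - R * T \<ge> 0")
    case True
    have "exp ((0 - t) / T) \<le> 1"
      using assms T_pos by simp
    from mult_left_mono[OF this True] show ?thesis
      by simp
  next
    case False
    then show ?thesis
      by (simp add: mult_nonpos_nonneg)
  qed
  ultimately show ?thesis
    by (simp add: R_def mult.commute)
qed

lemma queue_lipschitz: "\<exists>L. L-lipschitz_on {0..} (\<lambda>t. q t j)"
proof -
  define R where "R = (\<Sum>i\<in>UNIV. rbar i)"
  define Q where "Q = max (q 0 j) (T * R)"
  define L where "L = R + Q / T"
  have "R \<ge> 0" "Q \<ge> 0"
    using arrival_nonneg[of j "delays (q 0)"] arrival_le_total[of j "delays (q 0)"] q_init[of j]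
    by (auto simp: R_def Q_def)
  have bound: "\<bar>arrival j (delays (q t)) - q t j / T\<bar> \<le> L" if "t \<in> {0..}" for t
  proof -
    have "0 \<le> q t j / T" "q t j / T \<le> Q / T"
      using queue_nonneg[of t j] queue_bounded[of t j] that T_pos
      by (simp_all add: Q_def R_def divide_right_mono)
    then show ?thesis
      using arrival_nonneg[of j "delays (q t)"] arrival_le_total[of j "delays (q t)"] \<open>R \<ge> 0\<close>
      by (simp add: L_def R_def abs_le_iff)
  qed
  moreover have "L \<ge> 0"
    using \<open>R \<ge> 0\<close> \<open>Q \<ge> 0\<close> T_pos by (simp add: L_def)
  ultimately have "L-lipschitz_on {0..} (\<lambda>t. q t j)"
  proof (intro lipschitz_onI)
    show "dist (q x j) (q y j) \<le> L * dist x y" if "x \<in> {0..}" "y \<in> {0..}" for x y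
      using field_differentiable_bound[where f = "\<lambda>t. q t j" and S = "{0..}"
          and f' = "\<lambda>t. arrival j (delays (q t)) - q t j / T" and B = L] that q_ode bound
      by (simp add: dist_real_def)
  qed
  then show ?thesis ..
qed

lemma delays_lipschitz: "\<exists>L. L-lipschitz_on {0..} (\<lambda>t. delays (q t) j)"
proof -
  obtain L where "L-lipschitz_on {0..} (\<lambda>t. q t j)"
    using queue_lipschitz by blast
  moreover have "(T / c j)-lipschitz_on ((\<lambda>t. q t j) ` {0..}) (delay T (c j))"
    using lipschitz_on_delay[OF c_pos, of T] T_pos by (auto intro: lipschitz_on_subset)
  ultimately show ?thesis
    unfolding delays_def by (blast dest: lipschitz_on_compose2)
qed

definition lyapunov :: "real \<Rightarrow> real" where
  "lyapunov t = (\<Sum>j\<in>UNIV. T * beta (c j) (q t j) - mus j * q t j)"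

lemma lyapunov_deriv:
  assumes "t \<ge> 0"
  shows "(lyapunov has_real_derivative
            (\<Sum>j\<in>UNIV. (delays (q t) j - mus j) * (arrival j (delays (q t)) - q t j / T)))
           (at t within {0..})"
  unfolding lyapunov_def
proof (intro DERIV_sum)
  fix j
  have "((\<lambda>s. T * beta (c j) (q s j) - mus j * q s j) has_real_derivative
          T * (wait_fraction (c j) (q t j) * (arrival j (delays (q t)) - q t j / T))
          - mus j * (arrival j (delays (q t)) - q t j / T)) (at t within {0..})"
    by (intro DERIV_diff DERIV_cmult q_ode[OF assms]
          DERIV_chain'[OF q_ode[OF assms] has_real_derivative_beta[OF c_pos]])
  then show "((\<lambda>s. T * beta (c j) (q s j) - mus j * q s j) has_real_derivative
          (delays (q t) j - mus j) * (arrival j (delays (q t)) - q t j / T)) (at t within {0..})"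
    by (simp add: delays_def delay_eq_wait_fraction algebra_simps)
qed

lemma lyapunov_lower_bound: "(\<Sum>j\<in>UNIV. T * beta (c j) (qs j) - mus j * qs j) \<le> lyapunov t"
  unfolding lyapunov_def
proof (rule sum_mono)
  fix j
  have "T * (beta (c j) (qs j) + wait_fraction (c j) (qs j) * (q t j - qs j))
        \<le> T * beta (c j) (q t j)"
    using beta_above_tangent[OF c_pos] T_pos by (intro mult_left_mono) auto
  then show "T * beta (c j) (qs j) - mus j * qs j \<le> T * beta (c j) (q t j) - mus j * q t j"
    by (simp add: mus_eq delay_eq_wait_fraction algebra_simps)
qed

lemma lyapunov_dissipation:
  "(\<Sum>j\<in>UNIV. (delays (q t) j - mus j) * (arrival j (delays (q t)) - q t j / T))
     \<le> - (c j0 / T^2) * (delays (q t) j0 - mus j0)^2"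
proof -
  define m where "m = delays (q t)"
  define b where "b j = c j / T^2 * (m j - mus j)^2" for j
  have "(\<Sum>j\<in>UNIV. (m j - mus j) * (arrival j m - q t j / T))
        = (\<Sum>j\<in>UNIV. (m j - mus j) * (arrival j m - arrival j mus))
          + (\<Sum>j\<in>UNIV. (m j - mus j) * (qs j - q t j) / T)"
    unfolding sum.distrib[symmetric] arrival_mus using T_pos
    by (intro sum.cong) (simp_all add: field_simps)
  also have "\<dots> \<le> 0 + (\<Sum>j\<in>UNIV. - b j)"
  proof (intro add_mono arrival_monotone sum_mono)
    fix j
    let ?d = "wait_fraction (c j) (q t j) - wait_fraction (c j) (qs j)"
    have md: "m j - mus j = T * ?d"
      by (simp add: m_def delays_def mus_eq delay_eq_wait_fraction algebra_simps)
    have "(m j - mus j) * (qs j - q t j) / T = - (?d * (q t j - qs j))"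
      unfolding md using T_pos by (simp add: field_simps)
    moreover have "b j = c j * ?d^2"
      using T_pos by (simp add: b_def md power_mult_distrib)
    moreover have "c j * ?d^2 \<le> ?d * (q t j - qs j)"
      by (rule wait_fraction_cocoercive[OF c_pos])
    ultimately show "(m j - mus j) * (qs j - q t j) / T \<le> - b j"
      by linarith
  qed
  also have "\<dots> \<le> - b j0"
  proof -
    have "b j \<ge> 0" for j
      using c_pos[of j] by (simp add: b_def)
    then show ?thesis
      using member_le_sum[of j0 UNIV b] by (simp add: sum_negf)
  qed
  finally show ?thesis
    by (simp add: m_def b_def)
qed

lemma delays_tendsto: "((\<lambda>t. delays (q t) j) \<longlongrightarrow> mus j) at_top"
proof -
  obtain L where "L-lipschitz_on {0..} (\<lambda>t. delays (q t) j)"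
    using delays_lipschitz by blast
  then have "(L + 0)-lipschitz_on {0..} (\<lambda>t. delays (q t) j - mus j)"
    by (intro lipschitz_on_diff lipschitz_on_constant)
  then have "((\<lambda>t. delays (q t) j - mus j) \<longlongrightarrow> 0) at_top"
    using c_pos[of j] T_pos
    by (intro dissipation_tendsto_zero[OF lyapunov_deriv lyapunov_lower_bound lyapunov_dissipation])
       auto
  then show ?thesis
    by (rule LIM_zero_cancel)
qed

lemma demand_tendsto: "((\<lambda>t. demand i (delays (q t))) \<longlongrightarrow> rs i) at_top"
  unfolding rs_def by (rule tendsto_demand[OF delays_tendsto])

lemma flow_tendsto:
  "((\<lambda>t. demand i (delays (q t)) * logit eps (kap i) (delays (q t)) j) \<longlongrightarrow> Xs i j) at_top"
  unfolding Xs_def by (intro tendsto_mult demand_tendsto tendsto_logit[OF eps_pos delays_tendsto])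

lemma arrival_tendsto: "((\<lambda>t. arrival j (delays (q t))) \<longlongrightarrow> qs j / T) at_top"
  using tendsto_arrival[where mu = "\<lambda>t. delays (q t)" and m = mus, OF delays_tendsto]
  by (simp add: arrival_mus)

lemma queue_tendsto: "((\<lambda>t. q t j) \<longlongrightarrow> qs j) at_top"
  using linear_relaxation_tendsto[OF T_pos q_ode arrival_tendsto] T_pos by simp

end

theorem theorem4:
  fixes T eps :: real
    and c :: "'s::finite \<Rightarrow> real"
    and kap :: "'l::finite \<Rightarrow> 's \<Rightarrow> real"
    and rbar :: "'l \<Rightarrow> real"
    and p :: "'l \<Rightarrow> real \<Rightarrow> real"
    and f :: "'l \<Rightarrow> real \<Rightarrow> real"
    and U :: "'l \<Rightarrow> real \<Rightarrow> real"
    and q :: "real \<Rightarrow> 's \<Rightarrow> real"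
  assumes T_pos: "T > 0" and eps_pos: "eps > 0"
    and c_pos: "\<And>j. c j > 0"
    and rbar_pos: "\<And>i. rbar i > 0"
    \<comment> \<open>T_i is a nonnegative absolutely continuous random variable with density f i,
        and p i is its complementary CDF\<close>
    and f_nonneg: "\<And>i x. f i x \<ge> 0"
    and f_support: "\<And>i x. x < 0 \<Longrightarrow> f i x = 0"
    and f_prob: "\<And>i. (f i has_integral 1) {0..}"
    and p_ccdf: "\<And>i \<tau>. p i \<tau> = integral {\<tau><..} (f i)"
    \<comment> \<open>utilities\<close>
    and U_mono: "\<And>i. mono_on {0..} (U i)"
    and U_concave: "\<And>i. concave_on {0..} (U i)"
    and U_strict: "\<And>i. strictly_concave_on {0..rbar i} (U i)"
    and U_argmax: "\<And>i \<tau> r. \<tau> \<ge> 0 \<Longrightarrow> r \<ge> 0 \<Longrightarrow>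
        U i r - \<tau> * r \<le> U i (rbar i * p i \<tau>) - \<tau> * (rbar i * p i \<tau>)"
    \<comment> \<open>q is a trajectory of the dynamics on [0,\<infinity>) from a nonnegative initial queue\<close>
    and q_init: "\<And>j. q 0 j \<ge> 0"
    and q_ode: "\<And>t j. t \<ge> 0 \<Longrightarrow>
        ((\<lambda>s. q s j) has_real_derivative
           ((\<Sum>i\<in>UNIV. rbar i * p i (softmin eps (kap i) (\<lambda>k. delay T (c k) (q t k)))
                        * logit eps (kap i) (\<lambda>k. delay T (c k) (q t k)) j)
            - q t j / T)) (at t within {0..})"
  shows "\<exists>rs mus Xs qs.
     saddle_point T eps kap c U rbar rs mus \<and>
     (\<forall>r' mu'. saddle_point T eps kap c U rbar r' mu' \<longrightarrow> r' = rs \<and> mu' = mus) \<and>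
     feasible T rs Xs qs \<and>
     (\<forall>X' q'. feasible T rs X' q' \<longrightarrow> objective eps kap c rs Xs qs \<le> objective eps kap c rs X' q') \<and>
     (\<forall>X' q'. feasible T rs X' q' \<and> objective eps kap c rs X' q' \<le> objective eps kap c rs Xs qs
         \<longrightarrow> X' = Xs \<and> q' = qs) \<and>
     \<comment> \<open>it is an equilibrium of the dynamics\<close>
     (\<forall>j. mus j = delay T (c j) (qs j)) \<and>
     (\<forall>i. rs i = rbar i * p i (softmin eps (kap i) mus)) \<and>
     (\<forall>i j. Xs i j = rs i * logit eps (kap i) mus j) \<and>
     (\<forall>j. (\<Sum>i\<in>UNIV. Xs i j) - qs j / T = 0) \<and>
     \<comment> \<open>and the trajectory converges to it\<close>
     (\<forall>j. ((\<lambda>t. q t j) \<longlongrightarrow> qs j) at_top) \<and>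
     (\<forall>j. ((\<lambda>t. delay T (c j) (q t j)) \<longlongrightarrow> mus j) at_top) \<and>
     (\<forall>i. ((\<lambda>t. rbar i * p i (softmin eps (kap i) (\<lambda>k. delay T (c k) (q t k))))
            \<longlongrightarrow> rs i) at_top) \<and>
     (\<forall>i j. ((\<lambda>t. rbar i * p i (softmin eps (kap i) (\<lambda>k. delay T (c k) (q t k)))
              * logit eps (kap i) (\<lambda>k. delay T (c k) (q t k)) j) \<longlongrightarrow> Xs i j) at_top)"
proof -
  interpret elastic_network T eps c kap rbar p f U
    using T_pos eps_pos c_pos rbar_pos f_nonneg f_support f_prob p_ccdf U_mono U_strict U_argmax
    by unfold_locales (simp_all add: nonneg_density_def)
  obtain qs where qs: "\<And>j. qs j = T * arrival j (delays qs)"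
    using equilibrium_exists by blast
  interpret elastic_trajectory T eps c kap rbar p f U qs q
  proof
    show "\<And>j. qs j = T * arrival j (delays qs)" "\<And>j. q 0 j \<ge> 0"
      by (fact qs q_init)+
    show "\<And>t j. t \<ge> 0 \<Longrightarrow> ((\<lambda>s. q s j) has_real_derivative arrival j (delays (q t)) - q t j / T)
                                (at t within {0..})"
      using q_ode by (simp add: arrival_def demand_def delays_def)
  qed
  have "(\<Sum>i\<in>UNIV. Xs i j) - qs j / T = 0" for j
    by (simp add: Xs_col_sum)
  then show ?thesis
    using saddle_point_rs_mus saddle_point_unique feasible_Xs objective_min objective_min_unique mus_eq
      rs_def[unfolded demand_def] Xs_def queue_tendsto delays_tendsto[unfolded delays_def]
      demand_tendsto[unfolded demand_def delays_def] flow_tendsto[unfolded demand_def delays_def]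
    by blast
qed

end
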